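(* Assume $0<\nu<1$, $\mathbf{x}_E(t_0)\neq \mathbf{x}_P(t_0)$, and fix $\delta>0$. Let the pursuer use the feedback law $$\mathbf{v}_P(t)=\frac{\mathbf{z}_P(t)}{\|\mathbf{z}_P(t)\|},\qquad \mathbf{z}_P(t)=\big(R_{\mathcal C}-R_{\mathcal A}(t)\big)\frac{\mathbf{r}(t)}{\|\mathbf{r}(t)\|}+\nu\,\mathbf{y}(t).$$ Then, for every admissible evader control $\mathbf{v}_E(\cdot)$ with $\|\mathbf{v}_E(t)\|\le\nu$: (i) this law is well defined (i.e. $\mathbf{z}_P(t)\neq 0$) up to capture, and $\mathcal A(t)$ is contained in the interior $\mathcal C^\circ$ of $\mathcal C$ for all $t>t_0$ up to capture; (ii) capture ($\mathbf{x}_P(t)=\mathbf{x}_E(t)$) occurs at some finite time $t_{\rm capture}\le t_0+2(1+\nu^{-1})R_{\mathcal C}\ln(R_{\mathcal C}/\delta)$.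
   Context: Setting (simple-motion pursuit–evasion in the plane). An evader and a pursuer have positions $\mathbf{x}_E(t),\mathbf{x}_P(t)\in\mathbb R^2$ with dynamics $\dot{\mathbf{x}}_E=\mathbf{v}_E$, $\dot{\mathbf{x}}_P=\mathbf{v}_P$, where the controls satisfy $\|\mathbf{v}_E\|\le\nu$ and $\|\mathbf{v}_P\|\le 1$ with $0\le\nu<1$. The game starts at time $t_0$ and terminates at capture, i.e. the first time $\mathbf{x}_P=\mathbf{x}_E$. Set $\alpha=1/(1-\nu^2)$, $\gamma=\nu\alpha$, $\beta=\nu^2\alpha$, $\mathbf{r}(t)=\mathbf{x}_E(t)-\mathbf{x}_P(t)$. The Apollonius disc at time $t$ is the closed disc $\mathcal A(t)=\{\mathbf{x}:\|\mathbf{x}-\mathbf{x}_{\mathcal A}(t)\|\le R_{\mathcal A}(t)\}$ with center $\mathbf{x}_{\mathcal A}(t)=\alpha\mathbf{x}_E(t)-\beta\mathbf{x}_P(t)$ and radius $R_{\mathcal A}(t)=\gamma\|\mathbf{r}(t)\|$. Given $\delta>0$, $\mathcal C$ is the fixed closed disc with center $\mathbf{x}_{\mathcal C}=\mathbf{x}_{\mathcal A}(t_0)$ and radius $R_{\mathcal C}=R_{\mathcal A}(t_0)+\delta$, and $\mathbf{y}(t)=\mathbf{x}_{\mathcal A}(t)-\mathbf{x}_{\mathcal C}$. *)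

theory Defs
  imports "HOL-Analysis.Analysis"
begin

text \<open>Apollonius disc of evader position xe and pursuer position xp, speed ratio nu:
  alpha = 1/(1-nu^2), gamma = nu*alpha, beta = nu^2*alpha.\<close>

definition apo_center :: "real \<Rightarrow> real^2 \<Rightarrow> real^2 \<Rightarrow> real^2" where
  "apo_center \<nu> xe xp = (1 / (1 - \<nu>^2)) *\<^sub>R xe - (\<nu>^2 / (1 - \<nu>^2)) *\<^sub>R xp"

definition apo_radius :: "real \<Rightarrow> real^2 \<Rightarrow> real^2 \<Rightarrow> real" where
  "apo_radius \<nu> xe xp = (\<nu> / (1 - \<nu>^2)) * norm (xe - xp)"

definition C_center :: "real \<Rightarrow> real^2 \<Rightarrow> real^2 \<Rightarrow> real^2" where
  "C_center \<nu> xe0 xp0 = apo_center \<nu> xe0 xp0"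

definition C_radius :: "real \<Rightarrow> real \<Rightarrow> real^2 \<Rightarrow> real^2 \<Rightarrow> real" where
  "C_radius \<nu> \<delta> xe0 xp0 = apo_radius \<nu> xe0 xp0 + \<delta>"

definition pursuer_z :: "real \<Rightarrow> real \<Rightarrow> real^2 \<Rightarrow> real^2 \<Rightarrow> real^2 \<Rightarrow> real^2 \<Rightarrow> real^2" where
  "pursuer_z \<nu> \<delta> xe0 xp0 xe xp =
     (C_radius \<nu> \<delta> xe0 xp0 - apo_radius \<nu> xe xp) *\<^sub>R ((1 / norm (xe - xp)) *\<^sub>R (xe - xp))
     + \<nu> *\<^sub>R (apo_center \<nu> xe xp - C_center \<nu> xe0 xp0)"

definition pursuer_v :: "real \<Rightarrow> real \<Rightarrow> real^2 \<Rightarrow> real^2 \<Rightarrow> real^2 \<Rightarrow> real^2 \<Rightarrow> real^2" where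
  "pursuer_v \<nu> \<delta> xe0 xp0 xe xp =
     (1 / norm (pursuer_z \<nu> \<delta> xe0 xp0 xe xp)) *\<^sub>R pursuer_z \<nu> \<delta> xe0 xp0 xe xp"

end

theory Submission
  imports Defs
begin

text \<open>The Lyapunov function is \<open>gap = (R\<^sub>C - R\<^sub>A)\<^sup>2 - \<bar>y\<bar>\<^sup>2\<close>; while it and \<open>R\<^sub>C - R\<^sub>A\<close> are
  positive, the Apollonius disc lies inside \<open>C\<^sup>o\<close>. Along the motion the pursuer contributes
  \<open>2\<gamma>\<bar>z\<^sub>P\<bar>\<close> to its derivative and the evader removes at most \<open>2\<gamma>\<bar>w\<bar>\<close>, where
  \<open>w = \<nu>(R\<^sub>C - R\<^sub>A) r/\<bar>r\<bar> + y\<close>; the identity \<open>\<bar>z\<^sub>P\<bar>\<^sup>2 - \<bar>w\<bar>\<^sup>2 = (1 - \<nu>\<^sup>2) gap\<close> turns the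
  difference into \<open>gap' > \<nu> / ((1 + \<nu>) R\<^sub>C) gap\<close>. Hence \<open>gap\<close> dominates
  \<open>\<delta>\<^sup>2 exp (\<nu> (t - t\<^sub>0) / ((1 + \<nu>) R\<^sub>C))\<close> before capture, which is impossible once this
  exceeds \<open>R\<^sub>C\<^sup>2 > gap\<close>. As the evader is merely Lipschitz, the differential inequality is
  read with right Dini derivatives and closed by real induction.\<close>

section \<open>Real induction\<close>

lemma real_induction_right:
  fixes P :: "real \<Rightarrow> bool" and a b :: real
  assumes start: "P a"
    and left_closed: "\<And>t. t \<in> {a<..b} \<Longrightarrow> (\<forall>s\<in>{a..<t}. P s) \<Longrightarrow> P t"
    and right_step: "\<And>t. t \<in> {a..<b} \<Longrightarrow> (\<forall>s\<in>{a..t}. P s) \<Longrightarrow> \<forall>\<^sub>F s in at_right t. P s"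
  shows "\<forall>s\<in>{a..b}. P s"
proof (cases "a \<le> b")
  case True
  define A where "A = {t\<in>{a..b}. \<forall>s\<in>{a..t}. P s}"
  define m where "m = Sup A"
  have aA: "a \<in> A" using start True by (simp add: A_def)
  have bdd: "bdd_above A" unfolding A_def bdd_above_def by auto
  have "a \<le> m" unfolding m_def using aA bdd by (rule cSup_upper)
  moreover have "m \<le> b" unfolding m_def using aA by (intro cSup_least) (auto simp: A_def)
  ultimately have m: "m \<in> {a..b}" by simp
  have below_m: "P s" if s: "s \<in> {a..<m}" for s
  proof -
    from s have "s < Sup A" by (simp add: m_def)
    then obtain t where "t \<in> A" "s < t" using less_cSupD aA by blast
    then show "P s" using s by (simp add: A_def)
  qed
  have upto_m: "\<forall>s\<in>{a..m}. P s"
  proof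
    fix s assume "s \<in> {a..m}"
    then consider "s \<in> {a..<m}" | "s = a" | "s = m" "a < m" by fastforce
    then show "P s"
      by cases (use below_m start left_closed m in auto)
  qed
  have "m = b"
  proof (rule ccontr)
    assume "m \<noteq> b"
    with m have mb: "m \<in> {a..<b}" by simp
    from right_step[OF mb upto_m] obtain c where "c > m" and c: "\<And>y. m < y \<Longrightarrow> y < c \<Longrightarrow> P y"
      unfolding eventually_at_right_field by blast
    define s where "s = (m + min c b) / 2"
    have ms: "m < s" "s < c" "s \<le> b" using \<open>c > m\<close> mb by (auto simp: s_def)
    have "P y" if "y \<in> {a..s}" for y
      using upto_m c[of y] ms that by (cases "y \<le> m") auto
    then have "s \<in> A" using ms m by (simp add: A_def)
    then have "s \<le> m" unfolding m_def using bdd by (rule cSup_upper)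
    then show False using ms by simp
  qed
  then show ?thesis using upto_m by simp
qed simp

lemma first_hitting_time:
  fixes Q :: "real \<Rightarrow> bool" and a b :: real
  assumes hit: "\<exists>s\<in>{a..b}. Q s" and "\<not> Q a"
    and right_open: "\<And>t. t \<in> {a..<b} \<Longrightarrow> (\<forall>s\<in>{a..t}. \<not> Q s) \<Longrightarrow> \<forall>\<^sub>F s in at_right t. \<not> Q s"
  shows "\<exists>c\<in>{a<..b}. Q c \<and> (\<forall>s\<in>{a..<c}. \<not> Q s)"
proof (rule ccontr)
  assume none: "\<not> ?thesis"
  have "\<forall>s\<in>{a..b}. \<not> Q s"
  proof (rule real_induction_right)
    show "\<not> Q a" by fact
    show "\<not> Q t" if "t \<in> {a<..b}" "\<forall>s\<in>{a..<t}. \<not> Q s" for t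
      using none that by auto
    show "\<forall>\<^sub>F s in at_right t. \<not> Q s" if "t \<in> {a..<b}" "\<forall>s\<in>{a..t}. \<not> Q s" for t
      using right_open that .
  qed
  then show False using hit by blast
qed

lemma continuous_comparison_right:
  fixes G P :: "real \<Rightarrow> real" and a b :: real
  assumes cont: "continuous_on {a..b} G" "continuous_on {a..b} P"
    and start: "0 \<le> G a" "0 < P a"
    and nonzero: "\<And>t. t \<in> {a..b} \<Longrightarrow> 0 \<le> G t \<Longrightarrow> P t \<noteq> 0"
    and increase: "\<And>t. t \<in> {a..<b} \<Longrightarrow> (\<forall>s\<in>{a..t}. 0 \<le> G s \<and> 0 < P s) \<Longrightarrow>
        \<forall>\<^sub>F s in at_right t. G t < G s"
  shows "\<forall>s\<in>{a..b}. 0 \<le> G s \<and> 0 < P s"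
proof (rule real_induction_right)
  fix t assume t: "t \<in> {a<..b}" and before: "\<forall>s\<in>{a..<t}. 0 \<le> G s \<and> 0 < P s"
  have cl: "closure {a..<t} = {a..t}" and sub: "{a..t} \<subseteq> {a..b}" and tcl: "t \<in> closure {a..<t}"
    using t by auto
  have "0 \<le> G t" "0 \<le> P t"
    using continuous_ge_on_closure[OF _ tcl, of G 0] continuous_ge_on_closure[OF _ tcl, of P 0]
      continuous_on_subset[OF cont(1) sub] continuous_on_subset[OF cont(2) sub] before
    unfolding cl by (auto simp: less_imp_le)
  then show "0 \<le> G t \<and> 0 < P t" using nonzero[of t] t by auto
next
  fix t assume t: "t \<in> {a..<b}" and upto: "\<forall>s\<in>{a..t}. 0 \<le> G s \<and> 0 < P s"
  then have "0 \<le> G t" "0 < P t" by auto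
  have "at_right t \<le> at t within {a..b}"
    using t at_le[of "{t..b}" "{a..b}" t] by (simp add: at_within_Icc_at_right)
  moreover have "\<forall>\<^sub>F s in at t within {a..b}. 0 < P s"
  proof (rule order_tendstoD(1))
    show "(P \<longlongrightarrow> P t) (at t within {a..b})" using cont(2) t by (auto simp: continuous_on_def)
    show "0 < P t" by fact
  qed
  ultimately have "\<forall>\<^sub>F s in at_right t. 0 < P s" by (rule filter_leD)
  moreover have "\<forall>\<^sub>F s in at_right t. G t < G s" using increase[OF t upto] .
  ultimately show "\<forall>\<^sub>F s in at_right t. 0 \<le> G s \<and> 0 < P s"
  proof eventually_elim
    case (elim s)
    with \<open>0 \<le> G t\<close> show ?case by simp
  qed
qed (use start in auto)

section \<open>One-sided increments\<close>

lemma has_vector_derivative_right_increment: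
  fixes f :: "real \<Rightarrow> 'a::real_normed_vector"
  assumes "(f has_vector_derivative v) (at_right t)" and "0 < e"
  shows "\<forall>\<^sub>F s in at_right t. norm (f s - f t - (s - t) *\<^sub>R v) \<le> e * (s - t)"
proof -
  obtain d where "0 < d" and d: "\<And>s. s \<in> {t<..} \<Longrightarrow> norm (s - t) < d \<Longrightarrow>
      norm (f s - f t - (s - t) *\<^sub>R v) \<le> e * norm (s - t)"
    using assms unfolding has_vector_derivative_def has_derivative_within_alt by blast
  then show ?thesis
    unfolding eventually_at_right_field by (intro exI[of _ "t + d"]) auto
qed

lemma has_derivative_right_increment_along:
  fixes F :: "'a::real_normed_vector \<Rightarrow> 'b::real_normed_vector" and c :: "real \<Rightarrow> 'a"
  assumes F: "(F has_derivative F') (at (c t))"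
    and c: "\<forall>\<^sub>F s in at_right t. norm (c s - c t) \<le> M * (s - t)" and "0 < \<epsilon>"
  shows "\<forall>\<^sub>F s in at_right t. norm (F (c s) - F (c t) - F' (c s - c t)) \<le> \<epsilon> * (s - t)"
proof -
  define K where "K = \<bar>M\<bar> + 1"
  have K: "0 < K" by (simp add: K_def add_nonneg_pos)
  have "0 < \<epsilon> / K" using \<open>0 < \<epsilon>\<close> K by simp
  then obtain d where "0 < d" and d: "\<And>y. norm (y - c t) < d \<Longrightarrow>
      norm (F y - F (c t) - F' (y - c t)) \<le> \<epsilon> / K * norm (y - c t)"
    using F unfolding has_derivative_at_alt by blast
  have "\<forall>\<^sub>F s in at_right t. t < s \<and> s < t + d / K"
    unfolding eventually_at_right_field using \<open>0 < d\<close> K by (intro exI[of _ "t + d / K"]) auto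
  with c show ?thesis
  proof eventually_elim
    case (elim s)
    have "M * (s - t) \<le> K * (s - t)" using elim by (intro mult_right_mono) (auto simp: K_def)
    with elim have near: "norm (c s - c t) \<le> K * (s - t)" by linarith
    moreover have "K * (s - t) < d" using elim K pos_less_divide_eq[of K "s - t" d] by (simp add: mult.commute)
    ultimately have "norm (F (c s) - F (c t) - F' (c s - c t)) \<le> \<epsilon> / K * norm (c s - c t)"
      by (intro d) simp
    also have "\<dots> \<le> \<epsilon> / K * (K * (s - t))"
      using near \<open>0 < \<epsilon>\<close> K by (intro mult_left_mono) auto
    finally show ?case using K by simp
  qed
qed

lemma right_dini_lower_bound:
  fixes F :: "'a::real_inner \<times> 'a \<Rightarrow> real" and xE xP :: "real \<Rightarrow> 'a"
  assumes F: "(F has_derivative (\<lambda>h. Z \<bullet> snd h - W \<bullet> fst h)) (at (xE t, xP t))"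
    and lip: "\<nu>-lipschitz_on {t0..} xE" and t: "t0 \<le> t"
    and xP: "(xP has_vector_derivative v) (at_right t)" and v: "norm v \<le> 1" and \<epsilon>: "0 < \<epsilon>"
  shows "\<forall>\<^sub>F s in at_right t. (s - t) * (Z \<bullet> v - \<nu> * norm W - \<epsilon>) \<le> F (xE s, xP s) - F (xE t, xP t)"
proof -
  define e where "e = \<epsilon> / (2 * (norm Z + 1))"
  have Z1: "0 < norm Z + 1" by (simp add: add_nonneg_pos)
  have e: "0 < e" using \<epsilon> Z1 by (simp add: e_def)
  have "norm Z * e = \<epsilon> / 2 * (norm Z / (norm Z + 1))" by (simp add: e_def)
  also have "\<dots> \<le> \<epsilon> / 2" using \<epsilon> Z1 by (intro mult_left_le) auto
  finally have Ze: "norm Z * e \<le> \<epsilon> / 2" .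
  have xE_step: "norm (xE s - xE t) \<le> \<nu> * (s - t)" if "t < s" for s
    using lipschitz_on_normD[OF lip, of s t] t that by simp
  have "\<forall>\<^sub>F s in at_right t. norm ((xE s, xP s) - (xE t, xP t)) \<le> (\<nu> + 2) * (s - t)"
    using has_vector_derivative_right_increment[OF xP zero_less_one] eventually_at_right_less
  proof eventually_elim
    case (elim s)
    have "norm (xP s - xP t) \<le> norm ((s - t) *\<^sub>R v) + norm (xP s - xP t - (s - t) *\<^sub>R v)"
      by (rule norm_triangle_sub)
    also have "\<dots> \<le> 2 * (s - t)"
      unfolding mult_2 using v elim by (intro add_mono) (simp_all add: mult_left_le)
    finally show ?case
      using norm_Pair_le[of "xE s - xE t" "xP s - xP t"] xE_step[of s] elim by (simp add: algebra_simps)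
  qed
  from has_derivative_right_increment_along[of F _ "\<lambda>s. (xE s, xP s)", OF F this, of "\<epsilon> / 2"] \<epsilon>
  have "\<forall>\<^sub>F s in at_right t.
      \<bar>F (xE s, xP s) - F (xE t, xP t) - (Z \<bullet> (xP s - xP t) - W \<bullet> (xE s - xE t))\<bar> \<le> \<epsilon> / 2 * (s - t)"
    by simp
  with has_vector_derivative_right_increment[OF xP e] eventually_at_right_less
  show ?thesis
  proof eventually_elim
    case (elim s)
    define q where "q = xP s - xP t - (s - t) *\<^sub>R v"
    have "\<bar>Z \<bullet> q\<bar> \<le> norm Z * norm q" by (rule Cauchy_Schwarz_ineq2)
    also have "\<dots> \<le> norm Z * (e * (s - t))" using elim by (intro mult_left_mono) (auto simp: q_def)
    also have "\<dots> = (s - t) * (norm Z * e)" by (simp add: algebra_simps)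
    also have "\<dots> \<le> (s - t) * (\<epsilon> / 2)" using Ze elim by (intro mult_left_mono) auto
    finally have "- ((s - t) * (\<epsilon> / 2)) \<le> Z \<bullet> q" by linarith
    moreover have "Z \<bullet> (xP s - xP t) = (s - t) * (Z \<bullet> v) + Z \<bullet> q"
      by (simp add: q_def inner_diff_right)
    moreover have "W \<bullet> (xE s - xE t) \<le> (s - t) * (\<nu> * norm W)"
    proof -
      have "W \<bullet> (xE s - xE t) \<le> norm W * norm (xE s - xE t)" by (rule norm_cauchy_schwarz)
      also have "\<dots> \<le> norm W * (\<nu> * (s - t))" using xE_step elim by (intro mult_left_mono) auto
      finally show ?thesis by (simp add: algebra_simps)
    qed
    moreover have "(s - t) * (Z \<bullet> v - \<nu> * norm W - \<epsilon>)
        = (s - t) * (Z \<bullet> v) - (s - t) * (\<epsilon> / 2) - (s - t) * (\<nu> * norm W) - \<epsilon> / 2 * (s - t)"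
      by (simp add: algebra_simps)
    ultimately show ?case using elim by (simp only: abs_le_iff) linarith
  qed
qed
section \<open>Algebra of the feedback law\<close>

lemma apollonius_gap_has_derivative:
  fixes a b c :: "'a::real_inner" and R \<gamma> \<alpha> \<beta> :: real
  assumes "a \<noteq> b"
  defines "u \<equiv> sgn (a - b)" and "\<rho> \<equiv> R - \<gamma> * norm (a - b)" and "Y \<equiv> \<alpha> *\<^sub>R a - \<beta> *\<^sub>R b - c"
  shows "((\<lambda>p. (R - \<gamma> * norm (fst p - snd p))\<^sup>2 - (norm (\<alpha> *\<^sub>R fst p - \<beta> *\<^sub>R snd p - c))\<^sup>2)
      has_derivative (\<lambda>h. (2 *\<^sub>R ((\<rho> * \<gamma>) *\<^sub>R u + \<beta> *\<^sub>R Y)) \<bullet> snd h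
                          - (2 *\<^sub>R ((\<rho> * \<gamma>) *\<^sub>R u + \<alpha> *\<^sub>R Y)) \<bullet> fst h)) (at (a, b))"
proof -
  have "((\<lambda>p. fst p - snd p) has_derivative (\<lambda>h. fst h - snd h)) (at (a, b))"
    by (auto intro!: derivative_eq_intros)
  moreover have "(norm has_derivative (\<lambda>h. h \<bullet> u)) (at (a - b))"
    using has_derivative_norm[of "a - b"] assms(1) by (simp add: u_def)
  ultimately have norm_diff:
    "((\<lambda>p. norm (fst p - snd p)) has_derivative (\<lambda>h. (fst h - snd h) \<bullet> u)) (at (a, b))"
    using has_derivative_compose by fastforce
  show ?thesis
    unfolding power2_norm_eq_inner
    by (rule derivative_eq_intros norm_diff | simp)+
      (simp add: \<rho>_def Y_def inner_diff_left inner_diff_right inner_add_left inner_add_right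
        algebra_simps inner_commute)
qed

lemma pursuit_norm_identity:
  fixes u Y :: "'a::real_inner" and \<nu> \<rho> :: real
  assumes "norm u = 1"
  shows "(norm (\<rho> *\<^sub>R u + \<nu> *\<^sub>R Y))\<^sup>2 - (norm ((\<nu> * \<rho>) *\<^sub>R u + Y))\<^sup>2 = (1 - \<nu>\<^sup>2) * (\<rho>\<^sup>2 - (norm Y)\<^sup>2)"
proof -
  have "u \<bullet> u = 1" using assms by (simp add: power2_norm_eq_inner[symmetric])
  then show ?thesis
    unfolding power2_norm_eq_inner
    by (simp add: inner_add_left inner_add_right inner_commute algebra_simps power2_eq_square)
qed

lemma pursuit_direction_nonzero:
  fixes u Y :: "'a::real_inner" and \<nu> \<rho> :: real
  assumes "\<bar>\<nu>\<bar> < 1" "norm u = 1" "norm Y < \<rho>"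
  shows "\<rho> *\<^sub>R u + \<nu> *\<^sub>R Y \<noteq> 0"
proof -
  have "0 < 1 - \<nu>\<^sup>2" using assms(1) by (simp add: abs_square_less_1)
  moreover have "0 < \<rho>\<^sup>2 - (norm Y)\<^sup>2"
    using assms(3) by (simp add: power_strict_mono)
  ultimately have "0 < (norm (\<rho> *\<^sub>R u + \<nu> *\<^sub>R Y))\<^sup>2"
    using pursuit_norm_identity[OF assms(2), of \<rho> \<nu> Y] by (smt (verit) mult_pos_pos zero_le_power2)
  then show ?thesis by auto
qed

lemma pursuit_rate_bound:
  fixes u Y :: "'a::real_inner" and \<nu> \<rho> R :: real
  assumes \<nu>: "0 < \<nu>" "\<nu> < 1" and u: "norm u = 1" and \<rho>: "\<rho> < R" and Y: "norm Y < \<rho>"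
  shows "\<nu> / ((1 + \<nu>) * R) * (\<rho>\<^sup>2 - (norm Y)\<^sup>2)
    < 2 * \<nu> / (1 - \<nu>\<^sup>2) * (norm (\<rho> *\<^sub>R u + \<nu> *\<^sub>R Y) - norm ((\<nu> * \<rho>) *\<^sub>R u + Y))"
proof -
  define z w where "z = \<rho> *\<^sub>R u + \<nu> *\<^sub>R Y" and "w = (\<nu> * \<rho>) *\<^sub>R u + Y"
  define g where "g = \<rho>\<^sup>2 - (norm Y)\<^sup>2"
  have d: "0 < 1 - \<nu>\<^sup>2" using \<nu> by (simp add: abs_square_less_1)
  have g: "0 < g" using Y by (simp add: g_def power_strict_mono)
  have "norm z \<le> \<rho> + \<nu> * norm Y"
    using norm_triangle_ineq[of "\<rho> *\<^sub>R u" "\<nu> *\<^sub>R Y"] \<nu> u Y norm_ge_zero[of Y] by (simp add: z_def)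
  moreover have "norm w \<le> \<nu> * \<rho> + norm Y"
    using norm_triangle_ineq[of "(\<nu> * \<rho>) *\<^sub>R u" Y] \<nu> u Y norm_ge_zero[of Y] by (simp add: w_def)
  ultimately have "norm z + norm w \<le> (1 + \<nu>) * (\<rho> + norm Y)" by (simp add: algebra_simps)
  also have "\<dots> < (1 + \<nu>) * (2 * R)" using Y \<rho> \<nu> by (intro mult_strict_left_mono) auto
  finally have S: "norm z + norm w < 2 * (1 + \<nu>) * R" by (simp add: algebra_simps)
  have prod: "(norm z - norm w) * (norm z + norm w) = (1 - \<nu>\<^sup>2) * g"
    using pursuit_norm_identity[OF u, of \<rho> \<nu> Y] by (simp add: z_def w_def g_def algebra_simps power2_eq_square)
  with d g have "norm z + norm w \<noteq> 0" by auto
  then have S0: "0 < norm z + norm w" using norm_ge_zero[of z] norm_ge_zero[of w] by linarith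
  with prod have diff: "norm z - norm w = (1 - \<nu>\<^sup>2) * g / (norm z + norm w)"
    by (simp add: eq_divide_eq)
  have "\<nu> / ((1 + \<nu>) * R) * g = 2 * \<nu> * g / (2 * (1 + \<nu>) * R)"
    by (metis (no_types, lifting) divide_divide_eq_left' mult.assoc
        nonzero_mult_divide_mult_cancel_left times_divide_eq_left zero_neq_numeral)
  also have "\<dots> < 2 * \<nu> * g / (norm z + norm w)"
    using S S0 \<nu> g by (intro divide_strict_left_mono) auto
  also have "\<dots> = 2 * \<nu> / (1 - \<nu>\<^sup>2) * (norm z - norm w)" using d by (simp add: diff)
  finally show ?thesis by (simp add: z_def w_def g_def)
qed

section \<open>The pursuit\<close>

locale apollonius_pursuit =
  fixes \<nu> \<delta> t0 :: real and xE xP :: "real \<Rightarrow> real^2"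
  assumes nu_pos: "0 < \<nu>" and nu_lt1: "\<nu> < 1"
    and delta_pos: "0 < \<delta>"
    and init_distinct: "xE t0 \<noteq> xP t0"
    and evader: "\<nu>-lipschitz_on {t0..} xE"
    and pursuer: "\<And>t. t0 \<le> t \<Longrightarrow> (\<forall>s\<in>{t0..t}. xP s \<noteq> xE s) \<Longrightarrow>
        (xP has_vector_derivative pursuer_v \<nu> \<delta> (xE t0) (xP t0) (xE t) (xP t)) (at t within {t0..})"
begin

abbreviation RC :: real where "RC \<equiv> C_radius \<nu> \<delta> (xE t0) (xP t0)"
abbreviation xC :: "real^2" where "xC \<equiv> C_center \<nu> (xE t0) (xP t0)"

definition margin :: "real \<Rightarrow> real" where
  "margin t = RC - apo_radius \<nu> (xE t) (xP t)"

definition offset :: "real \<Rightarrow> real^2" where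
  "offset t = apo_center \<nu> (xE t) (xP t) - xC"

definition gap :: "real \<Rightarrow> real" where
  "gap t = (margin t)\<^sup>2 - (norm (offset t))\<^sup>2"

definition rate :: real where
  "rate = \<nu> / ((1 + \<nu>) * RC)"

definition gap_bound :: "real \<Rightarrow> real" where
  "gap_bound t = \<delta>\<^sup>2 * exp (rate * (t - t0))"

definition uncaptured :: "real \<Rightarrow> bool" where
  "uncaptured T \<longleftrightarrow> (\<forall>s\<in>{t0..T}. xP s \<noteq> xE s)"

lemma one_minus_nu_sq_pos: "0 < 1 - \<nu>\<^sup>2"
  using nu_pos nu_lt1 by (simp add: abs_square_less_1)

lemma RC_eq: "RC = \<nu> / (1 - \<nu>\<^sup>2) * norm (xE t0 - xP t0) + \<delta>"
  by (simp add: C_radius_def apo_radius_def)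

lemma delta_less_RC: "\<delta> < RC"
  using RC_eq nu_pos one_minus_nu_sq_pos init_distinct by simp

lemma margin_t0: "margin t0 = \<delta>"
  by (simp add: margin_def RC_eq apo_radius_def)

lemma gap_t0: "gap t0 = gap_bound t0"
  by (simp add: gap_def margin_t0 offset_def C_center_def gap_bound_def)

lemma gap_bound_pos: "0 < gap_bound t"
  using delta_pos by (simp add: gap_bound_def)

lemma margin_less_RC: "xE t \<noteq> xP t \<Longrightarrow> margin t < RC"
  using nu_pos one_minus_nu_sq_pos by (simp add: margin_def apo_radius_def)

lemma offset_less_margin:
  assumes "gap_bound t \<le> gap t" and "0 < margin t"
  shows "norm (offset t) < margin t"
proof -
  have "(norm (offset t))\<^sup>2 < (margin t)\<^sup>2" using assms gap_bound_pos[of t] by (simp add: gap_def)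
  then show ?thesis using assms(2) by (simp add: power_less_imp_less_base)
qed

lemma pursuer_z_eq:
  "pursuer_z \<nu> \<delta> (xE t0) (xP t0) (xE t) (xP t) = margin t *\<^sub>R sgn (xE t - xP t) + \<nu> *\<^sub>R offset t"
  by (simp add: pursuer_z_def margin_def offset_def sgn_div_norm divide_inverse_commute)

lemma pursuer_z_nonzero:
  assumes "gap_bound t \<le> gap t" and "0 < margin t" and "xE t \<noteq> xP t"
  shows "pursuer_z \<nu> \<delta> (xE t0) (xP t0) (xE t) (xP t) \<noteq> 0"
  unfolding pursuer_z_eq
  using pursuit_direction_nonzero[of \<nu> "sgn (xE t - xP t)" "offset t" "margin t"]
    offset_less_margin[OF assms(1,2)] nu_pos nu_lt1 assms(3)
  by (simp add: norm_sgn)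

lemma gap_has_derivative:
  assumes "xE t \<noteq> xP t"
  defines "z \<equiv> margin t *\<^sub>R sgn (xE t - xP t) + \<nu> *\<^sub>R offset t"
    and "w \<equiv> (\<nu> * margin t) *\<^sub>R sgn (xE t - xP t) + offset t"
  shows "((\<lambda>p. (RC - apo_radius \<nu> (fst p) (snd p))\<^sup>2 - (norm (apo_center \<nu> (fst p) (snd p) - xC))\<^sup>2)
    has_derivative (\<lambda>h. ((2 * \<nu> / (1 - \<nu>\<^sup>2)) *\<^sub>R z) \<bullet> snd h - ((2 / (1 - \<nu>\<^sup>2)) *\<^sub>R w) \<bullet> fst h))
    (at (xE t, xP t))"
proof -
  define \<gamma> \<alpha> \<beta> where "\<gamma> = \<nu> / (1 - \<nu>\<^sup>2)" and "\<alpha> = 1 / (1 - \<nu>\<^sup>2)" and "\<beta> = \<nu>\<^sup>2 / (1 - \<nu>\<^sup>2)"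
  have \<rho>: "RC - \<gamma> * norm (xE t - xP t) = margin t"
    by (simp add: margin_def apo_radius_def \<gamma>_def)
  have Y: "\<alpha> *\<^sub>R xE t - \<beta> *\<^sub>R xP t - xC = offset t"
    by (simp add: offset_def apo_center_def \<alpha>_def \<beta>_def)
  define u where "u = sgn (xE t - xP t)"
  have "2 *\<^sub>R ((margin t * \<gamma>) *\<^sub>R u + \<beta> *\<^sub>R offset t) = (2 * \<nu> / (1 - \<nu>\<^sup>2)) *\<^sub>R z"
    by (simp add: z_def u_def \<gamma>_def \<beta>_def scaleR_add_right power2_eq_square algebra_simps)
  moreover have "2 *\<^sub>R ((margin t * \<gamma>) *\<^sub>R u + \<alpha> *\<^sub>R offset t) = (2 / (1 - \<nu>\<^sup>2)) *\<^sub>R w"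
    by (simp add: w_def u_def \<gamma>_def \<alpha>_def scaleR_add_right algebra_simps)
  ultimately show ?thesis
    using apollonius_gap_has_derivative[OF assms(1), of RC \<gamma> \<alpha> \<beta> xC]
    unfolding u_def[symmetric] \<rho> Y
    by (simp add: apo_radius_def apo_center_def \<gamma>_def \<alpha>_def \<beta>_def)
qed

lemma uncaptured_mono: "uncaptured T \<Longrightarrow> s \<le> T \<Longrightarrow> uncaptured s"
  by (auto simp: uncaptured_def)

lemma uncaptured_distinct: "uncaptured T \<Longrightarrow> t0 \<le> t \<Longrightarrow> t \<le> T \<Longrightarrow> xE t \<noteq> xP t"
  unfolding uncaptured_def by (metis atLeastAtMost_iff)

lemma pursuer_derivative:
  "t0 \<le> t \<Longrightarrow> uncaptured t \<Longrightarrow>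
    (xP has_vector_derivative pursuer_v \<nu> \<delta> (xE t0) (xP t0) (xE t) (xP t)) (at t within {t0..})"
  using pursuer by (simp add: uncaptured_def)

lemma pursuer_continuous_on: "uncaptured T \<Longrightarrow> continuous_on {t0..T} xP"
  unfolding continuous_on_eq_continuous_within
proof
  fix t assume "uncaptured T" "t \<in> {t0..T}"
  then have "t0 \<le> t" "uncaptured t" by (auto intro: uncaptured_mono)
  then have "continuous (at t within {t0..}) xP"
    by (rule has_vector_derivative_continuous[OF pursuer_derivative])
  then show "continuous (at t within {t0..T}) xP" by (rule continuous_within_subset) auto
qed

lemma evader_continuous_on: "continuous_on {t0..T} xE"
  using lipschitz_on_continuous_on[OF evader] by (rule continuous_on_subset) auto

lemma gap_continuous_on: "uncaptured T \<Longrightarrow> continuous_on {t0..T} gap"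
  and margin_continuous_on: "uncaptured T \<Longrightarrow> continuous_on {t0..T} margin"
  using evader_continuous_on pursuer_continuous_on one_minus_nu_sq_pos
  unfolding gap_def margin_def offset_def apo_radius_def apo_center_def
  by (auto intro!: continuous_intros)

lemma gap_bound_right_increment:
  assumes "0 < e"
  shows "\<forall>\<^sub>F s in at_right t. gap_bound s - gap_bound t \<le> (s - t) * (rate * gap_bound t + e)"
proof -
  have "(gap_bound has_real_derivative rate * gap_bound t) (at_right t)"
    unfolding gap_bound_def by (auto intro!: derivative_eq_intros)
  from has_vector_derivative_right_increment[OF this[unfolded has_real_derivative_iff_has_vector_derivative] assms]
  have "\<forall>\<^sub>F s in at_right t. norm (gap_bound s - gap_bound t - (s - t) * (rate * gap_bound t)) \<le> e * (s - t)"
    by simp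
  then show ?thesis
    by (rule eventually_mono) (simp add: abs_le_iff algebra_simps)
qed

lemma gap_right_dini_exceeds_rate:
  assumes t: "t0 \<le> t" and nc: "uncaptured t" and ge: "gap_bound t \<le> gap t" and pos: "0 < margin t"
  shows "\<exists>\<eta>>0. \<forall>\<^sub>F s in at_right t. (s - t) * (rate * gap t + \<eta>) \<le> gap s - gap t"
proof -
  have ne: "xE t \<noteq> xP t" using uncaptured_distinct[OF nc t] by simp
  define u where "u = sgn (xE t - xP t)"
  define z w where "z = margin t *\<^sub>R u + \<nu> *\<^sub>R offset t" and "w = (\<nu> * margin t) *\<^sub>R u + offset t"
  define v where "v = pursuer_v \<nu> \<delta> (xE t0) (xP t0) (xE t) (xP t)"
  define D where "D = 2 * \<nu> / (1 - \<nu>\<^sup>2) * (norm z - norm w)"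
  define \<eta> where "\<eta> = (D - rate * gap t) / 2"
  have u: "norm u = 1" using ne by (simp add: u_def norm_sgn)
  have "z \<noteq> 0"
    using pursuer_z_nonzero[OF ge pos ne] by (simp add: pursuer_z_eq z_def u_def)
  then have v: "v = (1 / norm z) *\<^sub>R z" and "norm v = 1"
    by (simp_all add: v_def pursuer_v_def pursuer_z_eq z_def u_def)
  have inner_zv: "((2 * \<nu> / (1 - \<nu>\<^sup>2)) *\<^sub>R z) \<bullet> v = 2 * \<nu> / (1 - \<nu>\<^sup>2) * norm z"
    using \<open>z \<noteq> 0\<close> by (simp add: v power2_norm_eq_inner[symmetric] power2_eq_square)
  have norm_w: "norm ((2 / (1 - \<nu>\<^sup>2)) *\<^sub>R w) = 2 / (1 - \<nu>\<^sup>2) * norm w"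
    using one_minus_nu_sq_pos by simp
  have slope: "((2 * \<nu> / (1 - \<nu>\<^sup>2)) *\<^sub>R z) \<bullet> v - \<nu> * norm ((2 / (1 - \<nu>\<^sup>2)) *\<^sub>R w) = D"
    unfolding inner_zv norm_w D_def by (simp add: right_diff_distrib)
  have "rate * gap t < D"
    using pursuit_rate_bound[OF nu_pos nu_lt1 u margin_less_RC[OF ne] offset_less_margin[OF ge pos]]
    by (simp add: rate_def gap_def D_def z_def w_def)
  then have \<eta>: "0 < \<eta>" by (simp add: \<eta>_def)
  have "(xP has_vector_derivative v) (at_right t)"
    using pursuer_derivative[OF t nc] unfolding v_def
    by (rule has_vector_derivative_within_subset) (use t in auto)
  note dini = right_dini_lower_bound[OF gap_has_derivative[OF ne, folded u_def, folded z_def w_def]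
      evader t this _ \<eta>, unfolded slope]
  have "\<forall>\<^sub>F s in at_right t. (s - t) * (rate * gap t + \<eta>) \<le> gap s - gap t"
    using dini \<open>norm v = 1\<close> by (simp add: gap_def margin_def offset_def \<eta>_def field_simps)
  with \<eta> show ?thesis by blast
qed

lemma gap_grows_faster:
  assumes t: "t0 \<le> t" and nc: "uncaptured t" and ge: "gap_bound t \<le> gap t" and pos: "0 < margin t"
  shows "\<forall>\<^sub>F s in at_right t. gap t - gap_bound t < gap s - gap_bound s"
proof -
  obtain \<eta> where \<eta>: "0 < \<eta>"
    and gap: "\<forall>\<^sub>F s in at_right t. (s - t) * (rate * gap t + \<eta>) \<le> gap s - gap t"
    using gap_right_dini_exceeds_rate[OF assms] by blast
  have lead: "0 \<le> rate * (gap t - gap_bound t)"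
    using ge nu_pos delta_less_RC delta_pos by (simp add: rate_def)
  have "0 < \<eta> / 2" using \<eta> by simp
  from gap gap_bound_right_increment[OF this, of t] eventually_at_right_less show ?thesis
  proof eventually_elim
    case (elim s)
    have "(s - t) * (rate * gap t + \<eta>) - (s - t) * (rate * gap_bound t + \<eta> / 2)
        = (s - t) * (rate * (gap t - gap_bound t)) + (s - t) * (\<eta> / 2)"
      by (simp add: algebra_simps)
    moreover have "0 \<le> (s - t) * (rate * (gap t - gap_bound t))" using elim lead by simp
    moreover have "0 < (s - t) * (\<eta> / 2)" using elim \<eta> by simp
    ultimately show ?case using elim by linarith
  qed
qed

lemma apollonius_disc_subset:
  assumes "gap_bound t \<le> gap t" and "0 < margin t"
  shows "cball (apo_center \<nu> (xE t) (xP t)) (apo_radius \<nu> (xE t) (xP t)) \<subseteq> interior (cball xC RC)"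
proof
  fix x assume x: "x \<in> cball (apo_center \<nu> (xE t) (xP t)) (apo_radius \<nu> (xE t) (xP t))"
  have "dist xC x \<le> norm (offset t) + apo_radius \<nu> (xE t) (xP t)"
    using dist_triangle[of xC x "apo_center \<nu> (xE t) (xP t)"] x
    by (simp add: offset_def dist_norm norm_minus_commute)
  also have "\<dots> < RC" using offset_less_margin[OF assms] by (simp add: margin_def)
  finally show "x \<in> interior (cball xC RC)" by simp
qed

lemma uncaptured_right_open:
  assumes "t0 \<le> t" and "uncaptured t"
  shows "\<forall>\<^sub>F s in at_right t. xP s \<noteq> xE s"
proof -
  have "continuous (at t within {t0..}) xP"
    by (rule has_vector_derivative_continuous[OF pursuer_derivative[OF assms]])
  moreover have "continuous (at t within {t0..}) xE"
    using lipschitz_on_continuous_on[OF evader] assms(1) by (simp add: continuous_on_eq_continuous_within)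
  ultimately have "((\<lambda>s. xP s - xE s) \<longlongrightarrow> xP t - xE t) (at t within {t0..})"
    by (simp add: continuous_within tendsto_diff)
  then have "((\<lambda>s. xP s - xE s) \<longlongrightarrow> xP t - xE t) (at_right t)"
    by (rule tendsto_within_subset) (use assms(1) in auto)
  moreover have "xP t - xE t \<noteq> 0" using uncaptured_distinct[OF assms(2) assms(1)] by simp
  ultimately have "\<forall>\<^sub>F s in at_right t. xP s - xE s \<noteq> 0" by (rule tendsto_imp_eventually_ne)
  then show ?thesis by simp
qed

lemma gap_invariant:
  assumes "uncaptured T"
  shows "\<forall>s\<in>{t0..T}. gap_bound s \<le> gap s \<and> 0 < margin s"
proof -
  have "\<forall>s\<in>{t0..T}. 0 \<le> gap s - gap_bound s \<and> 0 < margin s"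
  proof (rule continuous_comparison_right)
    show "continuous_on {t0..T} (\<lambda>s. gap s - gap_bound s)"
      using gap_continuous_on[OF assms] by (auto simp: gap_bound_def intro!: continuous_intros)
    show "continuous_on {t0..T} margin" using margin_continuous_on[OF assms] .
    show "0 \<le> gap t0 - gap_bound t0" by (simp add: gap_t0)
    show "0 < margin t0" using margin_t0 delta_pos by simp
    show "margin t \<noteq> 0" if "0 \<le> gap t - gap_bound t" for t
    proof
      assume "margin t = 0"
      then have "gap t \<le> 0" by (simp add: gap_def)
      with that gap_bound_pos[of t] show False by simp
    qed
    show "\<forall>\<^sub>F s in at_right t. gap t - gap_bound t < gap s - gap_bound s"
      if "t \<in> {t0..<T}" and "\<forall>s\<in>{t0..t}. 0 \<le> gap s - gap_bound s \<and> 0 < margin s" for t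
      using that gap_grows_faster[of t] uncaptured_mono[OF assms, of t] by auto
  qed
  then show ?thesis by auto
qed

definition capture_deadline :: real where
  "capture_deadline = t0 + 2 * (1 + 1 / \<nu>) * RC * ln (RC / \<delta>)"

lemma t0_less_capture_deadline: "t0 < capture_deadline"
  using nu_pos delta_pos delta_less_RC by (simp add: capture_deadline_def add_pos_pos)

lemma gap_bound_capture_deadline: "gap_bound capture_deadline = RC\<^sup>2"
proof -
  have RC: "0 < RC" using delta_pos delta_less_RC by simp
  have "1 + 1 / \<nu> = (1 + \<nu>) / \<nu>" using nu_pos by (simp add: field_simps)
  then have "rate * (capture_deadline - t0) = (\<nu> * (1 + \<nu>) * RC) / (\<nu> * (1 + \<nu>) * RC) * (2 * ln (RC / \<delta>))"
    by (simp add: rate_def capture_deadline_def field_simps)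
  also have "\<dots> = 2 * ln (RC / \<delta>)" using nu_pos RC by simp
  finally have "rate * (capture_deadline - t0) = 2 * ln (RC / \<delta>)" .
  also have "\<dots> = ln ((RC / \<delta>)\<^sup>2)" using RC delta_pos by (simp add: ln_realpow)
  finally have "exp (rate * (capture_deadline - t0)) = (RC / \<delta>)\<^sup>2"
    using RC delta_pos by simp
  then show ?thesis using delta_pos by (simp add: gap_bound_def power_divide)
qed

lemma captured_before_deadline: "\<not> uncaptured capture_deadline"
proof
  assume nc: "uncaptured capture_deadline"
  let ?T = capture_deadline
  have "gap_bound ?T \<le> gap ?T" and pos: "0 < margin ?T"
    using gap_invariant[OF nc] t0_less_capture_deadline by auto
  moreover have "margin ?T < RC"
    using margin_less_RC uncaptured_distinct[OF nc] t0_less_capture_deadline by simp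
  then have "(margin ?T)\<^sup>2 < RC\<^sup>2" using pos by (simp add: power_strict_mono)
  then have "gap ?T < RC\<^sup>2"
    unfolding gap_def using zero_le_power2[of "norm (offset ?T)"] by linarith
  ultimately show False by (simp add: gap_bound_capture_deadline)
qed

end

theorem theorem1:
  fixes \<nu> \<delta> t0 :: real and xE xP :: "real \<Rightarrow> real^2"
  assumes nu_pos: "0 < \<nu>" and nu_lt1: "\<nu> < 1"
    and delta_pos: "0 < \<delta>"
    and init_distinct: "xE t0 \<noteq> xP t0"
    and evader: "\<nu>-lipschitz_on {t0..} xE"
    and pursuer: "\<And>t. t0 \<le> t \<Longrightarrow> (\<forall>s\<in>{t0..t}. xP s \<noteq> xE s) \<Longrightarrow>
        (xP has_vector_derivative pursuer_v \<nu> \<delta> (xE t0) (xP t0) (xE t) (xP t)) (at t within {t0..})"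
  shows "\<exists>tc. t0 < tc
     \<and> tc \<le> t0 + 2 * (1 + 1 / \<nu>) * C_radius \<nu> \<delta> (xE t0) (xP t0)
              * ln (C_radius \<nu> \<delta> (xE t0) (xP t0) / \<delta>)
     \<and> xP tc = xE tc
     \<and> (\<forall>t\<in>{t0..<tc}. xP t \<noteq> xE t \<and> pursuer_z \<nu> \<delta> (xE t0) (xP t0) (xE t) (xP t) \<noteq> 0)
     \<and> (\<forall>t\<in>{t0<..<tc}. cball (apo_center \<nu> (xE t) (xP t)) (apo_radius \<nu> (xE t) (xP t))
            \<subseteq> interior (cball (C_center \<nu> (xE t0) (xP t0)) (C_radius \<nu> \<delta> (xE t0) (xP t0))))"
proof -
  interpret apollonius_pursuit \<nu> \<delta> t0 xE xP
    by unfold_locales (fact assms)+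
  have "\<exists>tc\<in>{t0<..capture_deadline}. xP tc = xE tc \<and> (\<forall>s\<in>{t0..<tc}. xP s \<noteq> xE s)"
  proof (rule first_hitting_time)
    show "\<exists>s\<in>{t0..capture_deadline}. xP s = xE s"
      using captured_before_deadline by (auto simp: uncaptured_def)
    show "\<forall>\<^sub>F s in at_right t. xP s \<noteq> xE s" if "t \<in> {t0..<capture_deadline}" "\<forall>s\<in>{t0..t}. xP s \<noteq> xE s" for t
      using uncaptured_right_open that by (simp add: uncaptured_def)
  qed (use init_distinct in auto)
  then obtain tc where tc: "tc \<in> {t0<..capture_deadline}" "xP tc = xE tc"
    and before: "\<forall>s\<in>{t0..<tc}. xP s \<noteq> xE s" by blast
  have invariant: "gap_bound t \<le> gap t \<and> 0 < margin t \<and> xE t \<noteq> xP t" if "t \<in> {t0..<tc}" for t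
  proof -
    have "uncaptured t" using before that by (auto simp: uncaptured_def)
    then show ?thesis using gap_invariant uncaptured_distinct that by auto
  qed
  have "\<forall>t\<in>{t0..<tc}. xP t \<noteq> xE t \<and> pursuer_z \<nu> \<delta> (xE t0) (xP t0) (xE t) (xP t) \<noteq> 0"
    using invariant pursuer_z_nonzero by (metis (no_types))
  moreover have "\<forall>t\<in>{t0<..<tc}. cball (apo_center \<nu> (xE t) (xP t)) (apo_radius \<nu> (xE t) (xP t))
      \<subseteq> interior (cball xC RC)"
    using invariant apollonius_disc_subset by simp
  ultimately show ?thesis
    using tc unfolding capture_deadline_def by (intro exI[of _ tc]) simp
qed

end
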